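(* For all positive integers $n$ and $k$ with $k\le 2^n$, we have $v_2\big(s(2^n,k)\big)\le v_2\big(s(2^n,1)\big)$.
   Context: The (unsigned) Stirling numbers of the first kind $s(n,k)$ are defined by $x(x+1)\cdots(x+n-1)=\sum_{k=0}^n s(n,k)x^k$; in particular $s(n,1)=(n-1)!$. $v_2$ denotes the $2$-adic valuation. *)

theory Defs
  imports "HOL-Combinatorics.Stirling" "HOL-Computational_Algebra.Primes"
begin

end

theory Submission
  imports Defs "HOL-Computational_Algebra.Polynomial"
begin

text \<open>The 2-adic valuation of \<open>s(2^m, k)\<close> is computed exactly, by induction on \<open>m\<close>.
  With \<open>M = 2^m\<close>, splitting \<open>\<Prod>j<2M. (x + j)\<close> into even and odd factors gives
  \<open>s(2M, k) = \<Sum>a. 2^(M-a) s(M, a) b(k - a)\<close>, where \<open>b(t)\<close> are the coefficients of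
  \<open>Q(x) = \<Prod>j<M. (x + 2j + 1) = P(x + 1)\<close>, \<open>P(x) = \<Prod>j<M. (x + 2j)\<close>. Expanding \<open>P(x + 1)\<close>,
  the binomial coefficient \<open>C(M, t)\<close> dominates \<open>b(t)\<close> for even \<open>t\<close> (Kummer), while for odd \<open>t\<close>
  the symmetry \<open>Q(-x - 2M) = Q(x)\<close> forces \<open>2^(2m)\<close> to divide \<open>b(t)\<close>. In every range of \<open>k\<close>
  one term of the convolution is strictly less divisible by 2 than all the others, which yields
  the valuation as an explicit function of \<open>m\<close> and \<open>k\<close>; an elementary estimate shows that
  it is maximal at \<open>k = 1\<close>.\<close>

abbreviation v2 :: "nat \<Rightarrow> nat" where
  "v2 n \<equiv> multiplicity (2::nat) n"

lemma v2_power_dvd_iff: "n > 0 \<Longrightarrow> 2 ^ e dvd n \<longleftrightarrow> e \<le> v2 n"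
  using power_dvd_iff_le_multiplicity[of n "2::nat" e] by auto

lemma v2_not_power_Suc_dvd: "n > 0 \<Longrightarrow> \<not> 2 ^ Suc (v2 n) dvd n"
  using v2_power_dvd_iff[of n "Suc (v2 n)"] by simp

lemma v2_eq_0_iff_odd: "n > 0 \<Longrightarrow> v2 n = 0 \<longleftrightarrow> odd n"
  using v2_power_dvd_iff[of n 1] by auto

lemma v2_odd: "odd n \<Longrightarrow> v2 n = 0"
  using v2_eq_0_iff_odd[of n] by (cases n) auto

lemma v2_even_ge_1: "even n \<Longrightarrow> n > 0 \<Longrightarrow> 1 \<le> v2 n"
  using v2_eq_0_iff_odd[of n] by auto

lemma power_v2_le: "n > 0 \<Longrightarrow> 2 ^ v2 n \<le> n"
  using multiplicity_dvd[of "2::nat" n] by (simp add: dvd_imp_le)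

lemma v2_less_self: "n > 0 \<Longrightarrow> v2 n < n"
  using power_v2_le[of n] less_exp[of "v2 n"] by linarith

lemma v2_less_exp: "0 < n \<Longrightarrow> n < 2 ^ j \<Longrightarrow> v2 n < j"
  using power_v2_le[of n] power_strict_increasing_iff[of "2::nat" "v2 n" j] by linarith

lemma v2_le_exp: "0 < n \<Longrightarrow> n \<le> 2 ^ j \<Longrightarrow> v2 n \<le> j"
  using power_v2_le[of n] power_increasing_iff[of "2::nat" "v2 n" j] by linarith

lemma v2_mult: "x > 0 \<Longrightarrow> y > 0 \<Longrightarrow> v2 (x * y) = v2 x + v2 y"
  by (rule prime_elem_multiplicity_mult_distrib) auto

lemma v2_diff:
  assumes "0 < x" "x < y" "v2 x < v2 y"
  shows "v2 (y - x) = v2 x"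
proof (rule multiplicity_eqI)
  have y: "2 ^ Suc (v2 x) dvd y"
    using assms v2_power_dvd_iff[of y "Suc (v2 x)"] by auto
  then show "2 ^ v2 x dvd y - x"
    using multiplicity_dvd[of 2 x] dvd_trans[OF le_imp_power_dvd[of "v2 x" "Suc (v2 x)" 2] y]
    by (simp add: dvd_diff_nat)
  show "\<not> 2 ^ Suc (v2 x) dvd y - x"
  proof
    assume "2 ^ Suc (v2 x) dvd y - x"
    then have "2 ^ Suc (v2 x) dvd y - (y - x)" using y by (simp add: dvd_diff_nat)
    then show False using assms v2_not_power_Suc_dvd[of x] by simp
  qed
qed

lemma v2_pow2_minus: "0 < t \<Longrightarrow> t < 2 ^ j \<Longrightarrow> v2 (2 ^ j - t) = v2 t"
  using v2_diff[of t "2 ^ j"] v2_less_exp[of t j] by simp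

lemma v2_pow2_plus:
  assumes "0 < t" "t < 2 ^ j"
  shows "v2 (2 ^ j + t) = v2 t"
proof (rule multiplicity_eqI)
  have "v2 t < j" using v2_less_exp assms by blast
  then have pow: "2 ^ Suc (v2 t) dvd (2::nat) ^ j"
    by (intro le_imp_power_dvd) simp
  then show "2 ^ v2 t dvd 2 ^ j + t"
    using multiplicity_dvd[of 2 t] dvd_trans[OF le_imp_power_dvd[of "v2 t" "Suc (v2 t)" 2] pow]
    by simp
  show "\<not> 2 ^ Suc (v2 t) dvd 2 ^ j + t"
    using pow v2_not_power_Suc_dvd[of t] assms by (simp add: dvd_add_right_iff)
qed

lemma odd_binomial_pow2_minus_1: "j \<le> 2 ^ m - 1 \<Longrightarrow> odd ((2 ^ m - 1) choose j)"
proof (induction j)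
  case 0
  then show ?case by simp
next
  case (Suc j)
  define M :: nat where "M = 2 ^ m"
  have j: "Suc j < M" using Suc.prems unfolding M_def by (simp add: Suc_le_eq)
  have pos1: "(M - 1) choose Suc j > 0" and pos2: "(M - 1) choose j > 0" using j by simp_all
  have "Suc j * ((M - 1) choose Suc j) = (M - Suc j) * ((M - 1) choose j)"
    using binomial_absorption[of j "M - 1"] binomial_absorb_comp[of "M - 1" j] by simp
  then have "v2 (Suc j) + v2 ((M - 1) choose Suc j) = v2 (M - Suc j) + v2 ((M - 1) choose j)"
    using pos1 pos2 j v2_mult[of "Suc j" "(M - 1) choose Suc j"] v2_mult[of "M - Suc j" "(M - 1) choose j"]
    by simp
  moreover have "v2 ((M - 1) choose j) = 0" using Suc M_def by (simp add: v2_odd)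
  moreover have "v2 (M - Suc j) = v2 (Suc j)" using v2_pow2_minus[of "Suc j" m] j M_def by simp
  ultimately have "v2 ((M - 1) choose Suc j) = 0" by simp
  then show ?case using v2_eq_0_iff_odd pos1 M_def by simp
qed

lemma v2_binomial_pow2:
  assumes "0 < t" "t \<le> 2 ^ m"
  shows "v2 (2 ^ m choose t) = m - v2 t"
proof -
  define M :: nat where "M = 2 ^ m"
  have "t * (M choose t) = M * ((M - 1) choose (t - 1))"
    using times_binomial_minus1_eq[of t M] assms by simp
  moreover have "odd ((M - 1) choose (t - 1))"
    using odd_binomial_pow2_minus_1[of "t - 1" m] assms M_def by simp
  moreover have "0 < M choose t" "0 < (M - 1) choose (t - 1)" using assms M_def by simp_all
  ultimately have "v2 t + v2 (M choose t) = v2 M + v2 ((M - 1) choose (t - 1))"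
    using assms M_def v2_mult[of t "M choose t"] v2_mult[of M "(M - 1) choose (t - 1)"] by simp
  also have "\<dots> = m" using \<open>odd ((M - 1) choose (t - 1))\<close> M_def by (simp add: v2_odd)
  finally show ?thesis unfolding M_def by simp
qed

definition exact_pow2 :: "nat \<Rightarrow> int \<Rightarrow> bool" where
  "exact_pow2 e x \<longleftrightarrow> 2 ^ e dvd x \<and> \<not> 2 ^ Suc e dvd x"

lemma exact_pow2_imp_dvd: "exact_pow2 e x \<Longrightarrow> 2 ^ e dvd x"
  by (simp add: exact_pow2_def)

lemma exact_pow2_nonzero: "exact_pow2 e x \<Longrightarrow> x \<noteq> 0"
  by (auto simp: exact_pow2_def)

lemma exact_pow2_power: "exact_pow2 e (2 ^ e)"
  by (simp add: exact_pow2_def)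

lemma exact_pow2_odd: "odd x \<Longrightarrow> exact_pow2 0 x"
  by (simp add: exact_pow2_def)

lemma exact_pow2_of_nat_iff:
  assumes "n > 0"
  shows "exact_pow2 e (int n) \<longleftrightarrow> v2 n = e"
proof -
  have "(2::int) ^ j dvd int n \<longleftrightarrow> j \<le> v2 n" for j
    using v2_power_dvd_iff[OF assms] by (metis of_nat_dvd_iff of_nat_numeral of_nat_power)
  from this[of e] this[of "Suc e"] show ?thesis unfolding exact_pow2_def by auto
qed

lemma exact_pow2_mult:
  assumes "exact_pow2 e x" "exact_pow2 f y"
  shows "exact_pow2 (e + f) (x * y)"
proof -
  obtain x' where x: "x = 2 ^ e * x'" and "odd x'"
    using assms(1) unfolding exact_pow2_def by (auto elim!: dvdE)
  obtain y' where y: "y = 2 ^ f * y'" and "odd y'"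
    using assms(2) unfolding exact_pow2_def by (auto elim!: dvdE)
  have xy: "x * y = 2 ^ (e + f) * (x' * y')" using x y by (simp add: power_add algebra_simps)
  have "\<not> 2 ^ (e + f) * 2 dvd 2 ^ (e + f) * (x' * y')"
    using \<open>odd x'\<close> \<open>odd y'\<close> by (subst dvd_mult_cancel_left) simp_all
  then show ?thesis using xy by (simp add: exact_pow2_def mult.commute)
qed

lemma exact_pow2_add:
  assumes "exact_pow2 e x" "2 ^ Suc e dvd y"
  shows "exact_pow2 e (x + y)"
proof -
  have "2 ^ e dvd y" using assms(2) by (rule power_le_dvd) simp
  then show ?thesis
    using assms by (auto simp: exact_pow2_def dvd_add_left_iff)
qed

lemma exact_pow2_sum:
  assumes "finite A" "a0 \<in> A" "exact_pow2 e (f a0)"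
    and "\<And>a. a \<in> A \<Longrightarrow> a \<noteq> a0 \<Longrightarrow> 2 ^ Suc e dvd f a"
  shows "exact_pow2 e (sum f A)"
proof -
  have "sum f A = f a0 + sum f (A - {a0})" using assms(1,2) by (simp add: sum.remove)
  moreover have "2 ^ Suc e dvd sum f (A - {a0})" using assms(4) by (intro dvd_sum) auto
  ultimately show ?thesis using exact_pow2_add[OF assms(3)] by simp
qed

text \<open>The value of \<open>v2 (s(2^m, k))\<close> for \<open>1 \<le> k \<le> 2^m\<close>; the three cases for \<open>k > 2^L\<close> come
  from the dominant term in the convolution \<open>s(2^(L+1), k) = \<Sum>a. 2^(2^L-a) s(2^L, a) b(k - a)\<close>,
  where \<open>b\<close> are the coefficients of \<open>\<Prod>j<2^L. (x + 2j + 1)\<close>.\<close>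

fun stirling_val :: "nat \<Rightarrow> nat \<Rightarrow> nat" where
  "stirling_val 0 k = 0"
| "stirling_val (Suc L) k =
     (if k \<le> 2 ^ L then 2 ^ L - k + stirling_val L k
      else if k = 2 ^ Suc L then 0
      else if even (k - 2 ^ L) then L - v2 (k - 2 ^ L)
      else 2 * L - v2 (k - 2 ^ L + 1))"

text \<open>A lower bound for the 2-adic valuation of the coefficient of \<open>x^d\<close> in
  \<open>\<Prod>j<2^m. (x + 2j + 1)\<close>, exact unless \<open>d\<close> is odd.\<close>

definition odd_rising_val_bound :: "nat \<Rightarrow> nat \<Rightarrow> nat" where
  "odd_rising_val_bound m d = (if d = 0 then 0 else if even d then m - v2 d else 2 * m)"

lemma stirling_val_top: "stirling_val m (2 ^ m) = 0"
  by (cases m) auto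

lemma stirling_val_low: "k \<le> 2 ^ L \<Longrightarrow> stirling_val (Suc L) k = 2 ^ L - k + stirling_val L k"
  by simp

lemma stirling_val_high_even:
  "0 < t \<Longrightarrow> t < 2 ^ L \<Longrightarrow> even t \<Longrightarrow> stirling_val (Suc L) (2 ^ L + t) = L - v2 t"
  by simp

lemma stirling_val_high_odd:
  "t < 2 ^ L \<Longrightarrow> odd t \<Longrightarrow> stirling_val (Suc L) (2 ^ L + t) = 2 * L - v2 (t + 1)"
  by (cases t) auto

declare stirling_val.simps(2) [simp del]

lemma stirling_val_high_le:
  assumes "2 ^ L < k" "k \<le> 2 ^ Suc L"
  shows "stirling_val (Suc L) k \<le> 2 * L - 1"
proof (cases "k = 2 ^ Suc L")
  case True
  then show ?thesis using stirling_val_top[of "Suc L"] by simp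
next
  case False
  define t where "t = k - 2 ^ L"
  have t: "0 < t" "t < 2 ^ L" "k = 2 ^ L + t" using assms False by (auto simp: t_def)
  show ?thesis
  proof (cases "even t")
    case True
    then show ?thesis using t stirling_val_high_even[of t L] v2_even_ge_1[of t] by simp
  next
    case False
    then show ?thesis using t stirling_val_high_odd[of t L] v2_even_ge_1[of "t + 1"] by simp
  qed
qed

lemma stirling_val_complement_ge:
  assumes "1 \<le> a" "a < 2 ^ m"
  shows "m \<le> 2 ^ m - a + stirling_val m a"
proof (cases m)
  case 0
  then show ?thesis by simp
next
  case (Suc L)
  have "Suc L \<le> 2 ^ L" using less_exp[of L] by (simp only: Suc_le_eq)
  show ?thesis
  proof (cases "a \<le> 2 ^ L")
    case True
    then show ?thesis using Suc \<open>Suc L \<le> 2 ^ L\<close> stirling_val_low[of a L] by simp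
  next
    case False
    define t where "t = a - 2 ^ L"
    have t: "0 < t" "t < 2 ^ L" "a = 2 ^ L + t" using False assms Suc by (auto simp: t_def)
    have complement: "2 ^ m - a = 2 ^ L - t" using Suc t by simp
    show ?thesis
    proof (cases "even t")
      case True
      have "2 ^ v2 t \<le> 2 ^ L - t"
        using v2_pow2_minus[of t L] power_v2_le[of "2 ^ L - t"] t by simp
      moreover have "v2 t < 2 ^ v2 t" by (rule less_exp)
      moreover have "stirling_val m a = L - v2 t"
        using Suc t True stirling_val_high_even[of t L] by simp
      ultimately show ?thesis using Suc complement v2_less_exp[of t L] t by linarith
    next
      case False
      then show ?thesis
        using Suc t complement stirling_val_high_odd[of t L] v2_le_exp[of "t + 1" L] by simp
    qed
  qed
qed

lemma odd_rising_val_bound_ge: "0 < d \<Longrightarrow> m + 1 \<le> d + odd_rising_val_bound m d"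
  using v2_less_self[of d] by (auto simp: odd_rising_val_bound_def)

lemma odd_rising_val_bound_mono: "odd_rising_val_bound L d \<le> odd_rising_val_bound (Suc L) d"
  by (auto simp: odd_rising_val_bound_def)

lemma stirling_val_one: "stirling_val m 1 = 2 ^ m - 1 - m"
proof (induction m)
  case 0
  then show ?case by simp
next
  case (Suc L)
  have "Suc L \<le> 2 ^ L" using less_exp[of L] by (simp only: Suc_le_eq)
  then show ?case using stirling_val_low[of 1 L] Suc by simp
qed

lemma three_mult_Suc_le_pow2: "3 * L + 1 \<le> 2 ^ Suc L"
proof (induction L)
  case 0
  then show ?case by simp
next
  case (Suc L)
  then show ?case by (cases L) simp_all
qed

lemma stirling_val_le_one: "1 \<le> k \<Longrightarrow> k \<le> 2 ^ m \<Longrightarrow> stirling_val m k \<le> stirling_val m 1"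
proof (induction m arbitrary: k)
  case 0
  then show ?case by simp
next
  case (Suc L)
  show ?case
  proof (cases "k \<le> 2 ^ L")
    case True
    then show ?thesis
      using Suc.IH[of k] Suc.prems stirling_val_low[of k L] stirling_val_low[of 1 L] by simp
  next
    case False
    then have "stirling_val (Suc L) k \<le> 2 * L - 1"
      using stirling_val_high_le[of L k] Suc.prems by simp
    then show ?thesis
      using stirling_val_one[of "Suc L"] three_mult_Suc_le_pow2[of L] by simp
  qed
qed

lemma stirling_val_low_gap:
  "1 \<le> a \<Longrightarrow> a < k \<Longrightarrow> k \<le> 2 ^ m \<Longrightarrow>
    stirling_val m k + 1 \<le> (k - a) + stirling_val m a + odd_rising_val_bound m (k - a)"
proof (induction m arbitrary: a k)
  case 0
  then show ?case by simp
next
  case (Suc L)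
  have bound: "Suc L + 1 \<le> (k - a) + odd_rising_val_bound (Suc L) (k - a)"
    using odd_rising_val_bound_ge[of "k - a" "Suc L"] Suc.prems by simp
  show ?case
  proof (cases "k \<le> 2 ^ L")
    case True
    then show ?thesis
      using Suc.IH[of a k] Suc.prems stirling_val_low[of k L] stirling_val_low[of a L]
        odd_rising_val_bound_mono[of L "k - a"] by simp
  next
    case False
    have Fk: "stirling_val (Suc L) k \<le> 2 * L"
      using stirling_val_high_le[of L k] False Suc.prems by simp
    show ?thesis
    proof (cases "stirling_val (Suc L) k \<le> L \<or> odd (k - a)")
      case True
      then show ?thesis using bound Fk Suc.prems by (auto simp: odd_rising_val_bound_def)
    next
      case False
      have "k \<noteq> 2 ^ Suc L" using False stirling_val_top[of "Suc L"] by auto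
      define t where "t = k - 2 ^ L"
      have t: "0 < t" "t < 2 ^ L" "k = 2 ^ L + t"
        using \<open>k \<noteq> 2 ^ Suc L\<close> \<open>\<not> k \<le> 2 ^ L\<close> Suc.prems by (auto simp: t_def)
      have "odd t" using False t stirling_val_high_even[of t L] by auto
      have "even (k - a)" using False by simp
      have "L \<le> stirling_val (Suc L) a"
      proof (cases "a \<le> 2 ^ L")
        case True
        have "a \<noteq> 2 ^ L" using \<open>odd t\<close> \<open>even (k - a)\<close> t by auto
        then show ?thesis
          using True Suc.prems stirling_val_complement_ge[of a L] stirling_val_low[of a L] by simp
      next
        case False
        define s where "s = a - 2 ^ L"
        have s: "s < t" "a = 2 ^ L + s" using False Suc.prems t by (auto simp: s_def)
        have "odd s" using \<open>odd t\<close> \<open>even (k - a)\<close> s t by auto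
        then show ?thesis
          using s t stirling_val_high_odd[of s L] v2_le_exp[of "s + 1" L] by simp
      qed
      then show ?thesis using bound Fk by linarith
    qed
  qed
qed

lemma stirling_val_odd_gap_high:
  assumes t: "odd t" "t \<le> a" and a: "odd a" "2 ^ L < a" "a + 3 \<le> 2 ^ Suc L"
  shows "2 * Suc L - v2 (t + 1) + 1
    \<le> (2 ^ Suc L - a) + stirling_val (Suc L) a + odd_rising_val_bound (Suc L) (2 ^ Suc L + t - a)"
proof -
  define s where "s = a - 2 ^ L"
  define w where "w = v2 (s + 1)"
  define d where "d = 2 ^ Suc L + t - a"
  have "L \<noteq> 0" using a by (cases L) auto
  then have s: "a = 2 ^ L + s" "s + 3 \<le> 2 ^ L" "odd s" using a by (auto simp: s_def)
  have Fa: "stirling_val (Suc L) a = 2 * L - w"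
    using s stirling_val_high_odd[of s L] by (simp add: w_def)
  have "w < L" using v2_less_exp[of "s + 1" L] s by (simp add: w_def)
  have w_eq: "v2 (a + 1) = w" using v2_pow2_plus[of "s + 1" L] s by (simp add: w_def add.assoc)
  have "even d" "0 < d" using t a by (auto simp: d_def)
  then have beta: "odd_rising_val_bound (Suc L) d = Suc L - v2 d"
    by (simp add: odd_rising_val_bound_def)
  show ?thesis
  proof (cases "a = t")
    case True
    then show ?thesis using Fa beta s w_eq \<open>w < L\<close> by (simp add: d_def)
  next
    case False
    have at: "0 < a - t" "a - t < 2 ^ Suc L" using False t a by auto
    have "v2 d = v2 (a - t)" using v2_pow2_minus[OF at] t a by (simp add: d_def)
    moreover have "v2 (a - t) < Suc L" using v2_less_exp[OF at] .
    moreover have "w \<le> v2 (t + 1) \<or> v2 (a - t) = v2 (t + 1)"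
      using v2_diff[of "t + 1" "a + 1"] w_eq False t by (cases "w \<le> v2 (t + 1)") auto
    ultimately show ?thesis
      using Fa beta s \<open>w < L\<close> unfolding d_def[symmetric] by auto
  qed
qed

lemma stirling_val_odd_gap:
  assumes t: "odd t" "t < 2 ^ m" "t \<le> a" and a: "a \<le> 2 ^ m" "a \<noteq> 2 ^ m - 1"
  shows "2 * m - v2 (t + 1) + 1
    \<le> (2 ^ m - a) + stirling_val m a + odd_rising_val_bound m (2 ^ m + t - a)"
proof -
  obtain L where m: "m = Suc L" using t by (cases m) auto
  have vt: "1 \<le> v2 (t + 1)" "v2 (t + 1) \<le> m"
    using v2_even_ge_1[of "t + 1"] v2_le_exp[of "t + 1" m] t by auto
  consider "a = 2 ^ m" | "a < 2 ^ m" "even a" | "a \<le> 2 ^ L" "odd a" | "2 ^ L < a" "a < 2 ^ m" "odd a"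
    using a by fastforce
  then show ?thesis
  proof cases
    case 1
    then show ?thesis
      using t vt stirling_val_top[of m] odd_pos[of t] by (simp add: odd_rising_val_bound_def)
  next
    case 2
    then have "odd (2 ^ m + t - a)" using t m by auto
    then have "odd_rising_val_bound m (2 ^ m + t - a) = 2 * m"
      by (auto simp: odd_rising_val_bound_def)
    then show ?thesis using 2 by linarith
  next
    case 3
    have "a \<noteq> 2 ^ L"
    proof
      assume "a = 2 ^ L"
      then show False using 3 a m by (cases L) auto
    qed
    then have "a < 2 ^ L" using 3 by simp
    moreover have "Suc L \<le> 2 ^ L" using less_exp[of L] by (simp only: Suc_le_eq)
    moreover have "1 \<le> a" using t odd_pos[of t] by simp
    ultimately show ?thesis
      using vt m stirling_val_complement_ge[of a L] stirling_val_low[of a L] by simp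
  next
    case 4
    then have "a + 1 < 2 * 2 ^ L" using a m by auto
    then have "a + 3 \<le> 2 * 2 ^ L" using \<open>odd a\<close> by presburger
    then show ?thesis using stirling_val_odd_gap_high[of t a L] 4 t m by simp
  qed
qed

definition scaled_rising_poly :: "int \<Rightarrow> nat \<Rightarrow> int poly" where
  "scaled_rising_poly c n = (\<Prod>j<n. [:c * of_nat j, 1:])"

definition odd_rising_poly :: "nat \<Rightarrow> int poly" where
  "odd_rising_poly n = (\<Prod>j<n. [:2 * of_nat j + 1, 1:])"

lemma coeff_mult_linear:
  "coeff ((p::int poly) * [:x, 1:]) a = x * coeff p a + (if a = 0 then 0 else coeff p (a - 1))"
  by (cases a) (simp_all add: mult_pCons_right del: mult_pCons_left)

lemma coeff_scaled_rising_poly: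
  "coeff (scaled_rising_poly c n) a = c ^ (n - a) * int (stirling n a)"
proof (induction n arbitrary: a)
  case 0
  then show ?case by (cases a) (simp_all add: scaled_rising_poly_def)
next
  case (Suc n)
  have P: "scaled_rising_poly c (Suc n) = scaled_rising_poly c n * [:c * of_nat n, 1:]"
    by (simp add: scaled_rising_poly_def)
  show ?case
  proof (cases a)
    case 0
    have "stirling n 0 = 0 \<or> n = 0" by (cases n) auto
    then show ?thesis using 0 by (auto simp add: P coeff_mult_linear Suc.IH)
  next
    case (Suc b)
    show ?thesis
    proof (cases "b < n")
      case True
      have e: "n - b = Suc (n - Suc b)" using True by simp
      have "coeff (scaled_rising_poly c (Suc n)) a
          = c * of_nat n * (c ^ (n - Suc b) * int (stirling n (Suc b))) + c ^ (n - b) * int (stirling n b)"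
        using Suc by (simp add: P coeff_mult_linear Suc.IH)
      also have "\<dots> = c ^ (n - b) * (of_nat n * int (stirling n (Suc b)) + int (stirling n b))"
        unfolding e by (simp add: algebra_simps)
      also have "\<dots> = c ^ (Suc n - a) * int (stirling (Suc n) a)" using Suc by simp
      finally show ?thesis .
    next
      case False
      then show ?thesis using Suc by (simp add: P coeff_mult_linear Suc.IH)
    qed
  qed
qed

lemma degree_prod_linear: "degree (\<Prod>j<n. [:f j, 1:] :: int poly) = n"
  by (subst degree_prod_sum_eq) auto

lemma coeff_prod_linear_top: "coeff (\<Prod>j<n. [:f j, 1:] :: int poly) n = 1"
  using lead_coeff_prod[of "\<lambda>j. [:f j, 1:]" "{..<n}"] by (simp add: degree_prod_linear)

lemma degree_scaled_rising_poly [simp]: "degree (scaled_rising_poly c n) = n"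
  unfolding scaled_rising_poly_def by (rule degree_prod_linear)

lemma degree_odd_rising_poly [simp]: "degree (odd_rising_poly n) = n"
  unfolding odd_rising_poly_def by (rule degree_prod_linear)

lemma coeff_odd_rising_poly_top: "coeff (odd_rising_poly n) n = 1"
  unfolding odd_rising_poly_def by (rule coeff_prod_linear_top)

lemma odd_coeff_0_odd_rising_poly: "odd (coeff (odd_rising_poly n) 0)"
proof -
  have "coeff (odd_rising_poly n) 0 = (\<Prod>j<n. 2 * int j + 1)"
    by (simp add: poly_0_coeff_0[symmetric] odd_rising_poly_def poly_prod)
  moreover have "odd (\<Prod>j<n. 2 * int j + 1)"
    by (induction n) auto
  ultimately show ?thesis by simp
qed

lemma scaled_rising_poly_split:
  "scaled_rising_poly 1 (2 * n) = scaled_rising_poly 2 n * odd_rising_poly n"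
proof (induction n)
  case 0
  then show ?case by (simp add: scaled_rising_poly_def odd_rising_poly_def)
next
  case (Suc n)
  have "2 * Suc n = Suc (Suc (2 * n))" by simp
  then have "scaled_rising_poly 1 (2 * Suc n)
      = scaled_rising_poly 1 (2 * n) * [:int (2 * n), 1:] * [:int (2 * n) + 1, 1:]"
    by (simp add: scaled_rising_poly_def del: mult_pCons_left mult_pCons_right)
  also have "\<dots> = scaled_rising_poly 2 (Suc n) * odd_rising_poly (Suc n)"
    using Suc by (simp add: scaled_rising_poly_def odd_rising_poly_def mult_ac
        del: mult_pCons_left mult_pCons_right)
  finally show ?case .
qed

lemma stirling_double_conv:
  "int (stirling (2 * n) k)
    = (\<Sum>a\<le>k. 2 ^ (n - a) * int (stirling n a) * coeff (odd_rising_poly n) (k - a))"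
proof -
  have "int (stirling (2 * n) k) = coeff (scaled_rising_poly 2 n * odd_rising_poly n) k"
    by (simp add: coeff_scaled_rising_poly flip: scaled_rising_poly_split)
  then show ?thesis by (simp add: coeff_mult coeff_scaled_rising_poly)
qed

lemma coeff_pcompose_linear:
  "coeff (pcompose p [:c, d:]) t
    = (\<Sum>j\<le>degree p. coeff p j * (of_nat (j choose t) * c ^ (j - t) * (d::int) ^ t))"
proof -
  have coeff_power: "coeff ([:c, d:] ^ j) t = of_nat (j choose t) * c ^ (j - t) * d ^ t" for j
  proof (cases "t \<le> j")
    case True
    then show ?thesis using coeff_linear_poly_power[of t j c d] by (simp add: mult_ac)
  next
    case False
    have "degree ([:c, d:] ^ j) \<le> j"
      using degree_power_le[of "[:c, d:]" j] degree_pCons_le[of c "[:d:]"] by (simp add: order_trans)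
    then show ?thesis using False by (simp add: coeff_eq_0)
  qed
  have "pcompose p [:c, d:] = poly (map_poly (\<lambda>x. [:x:]) p) [:c, d:]"
    by (rule pcompose_altdef)
  also have "\<dots> = (\<Sum>j\<le>degree p. [:coeff p j:] * [:c, d:] ^ j)"
    by (simp add: poly_altdef degree_map_poly coeff_map_poly)
  finally show ?thesis by (simp add: coeff_sum coeff_power mult_pCons_left)
qed

lemma pcompose_linear: "pcompose [:a, 1:] q = [:a:] + (q::int poly)"
  by (simp add: pcompose_pCons)

lemma odd_rising_poly_shift: "odd_rising_poly n = pcompose (scaled_rising_poly 2 n) [:1, 1:]"
  by (simp add: odd_rising_poly_def scaled_rising_poly_def pcompose_prod pcompose_linear)

lemma odd_rising_poly_reflect:
  assumes "even n"
  shows "pcompose (odd_rising_poly n) [:- (2 * int n), -1:] = odd_rising_poly n"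
proof -
  have "pcompose (odd_rising_poly n) [:- (2 * int n), -1:]
      = (\<Prod>j<n. pcompose [:2 * int j + 1, 1:] [:- (2 * int n), -1:])"
    by (simp add: odd_rising_poly_def pcompose_prod)
  also have "\<dots> = (\<Prod>j<n. - [:2 * int (n - Suc j) + 1, 1:])"
  proof (rule prod.cong)
    fix j assume "j \<in> {..<n}"
    then have "int (n - Suc j) = int n - int j - 1" by auto
    then show "pcompose [:2 * int j + 1, 1:] [:- (2 * int n), -1:] = - [:2 * int (n - Suc j) + 1, 1:]"
      by (simp add: pcompose_linear algebra_simps)
  qed simp
  also have "\<dots> = (-1) ^ n * (\<Prod>j<n. [:2 * int (n - Suc j) + 1, 1:])"
    by (simp only: prod_uminus card_lessThan)
  also have "(\<Prod>j<n. [:2 * int (n - Suc j) + 1, 1:]) = odd_rising_poly n"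
    unfolding odd_rising_poly_def by (rule prod.nat_diff_reindex)
  finally show ?thesis using assms by simp
qed

lemma coeff_odd_rising_poly:
  "coeff (odd_rising_poly n) t = (\<Sum>j\<le>n. 2 ^ (n - j) * int (stirling n j) * int (j choose t))"
  by (simp add: odd_rising_poly_shift coeff_pcompose_linear coeff_scaled_rising_poly)

lemma coeff_odd_rising_poly_reflect:
  assumes "even n"
  shows "coeff (odd_rising_poly n) t
    = (\<Sum>j\<le>n. coeff (odd_rising_poly n) j * (int (j choose t) * (- (2 * int n)) ^ (j - t) * (-1) ^ t))"
  by (subst (1) odd_rising_poly_reflect[OF assms, symmetric]) (simp add: coeff_pcompose_linear)

definition stirling_conv_term :: "nat \<Rightarrow> nat \<Rightarrow> nat \<Rightarrow> int" where
  "stirling_conv_term m k a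
    = 2 ^ (2 ^ m - a) * int (stirling (2 ^ m) a) * coeff (odd_rising_poly (2 ^ m)) (k - a)"

lemma stirling_pow2_Suc_conv:
  "int (stirling (2 ^ Suc m) k) = (\<Sum>a\<le>k. stirling_conv_term m k a)"
  using stirling_double_conv[of "2 ^ m" k] by (simp add: stirling_conv_term_def)

context
  fixes m :: nat
  assumes exact_val: "\<And>a. 1 \<le> a \<Longrightarrow> a \<le> 2 ^ m \<Longrightarrow>
    exact_pow2 (stirling_val m a) (int (stirling (2 ^ m) a))"
begin

lemma stirling_pow2_dvd: "1 \<le> a \<Longrightarrow> a \<le> 2 ^ m \<Longrightarrow> 2 ^ stirling_val m a dvd int (stirling (2 ^ m) a)"
  using exact_val exact_pow2_imp_dvd by blast

text \<open>In the expansion of \<open>coeff_odd_rising_poly\<close> the term \<open>j = 2^m\<close>, i.e. \<open>C(2^m, t)\<close>,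
  is the least divisible by 2.\<close>

lemma exact_pow2_coeff_odd_rising_poly_even:
  assumes t: "even t" "0 < t" "t \<le> 2 ^ m"
  shows "exact_pow2 (m - v2 t) (coeff (odd_rising_poly (2 ^ m)) t)"
proof (cases "t = 2 ^ m")
  case True
  then show ?thesis using coeff_odd_rising_poly_top[of "2 ^ m"] exact_pow2_odd[of 1] by simp
next
  case False
  define M :: nat where "M = 2 ^ m"
  have "t < M" using False t M_def by simp
  have vt: "1 \<le> v2 t" "v2 t \<le> m" using v2_even_ge_1[of t] v2_le_exp[of t m] t by auto
  have "exact_pow2 (m - v2 t) (\<Sum>j\<le>M. 2 ^ (M - j) * int (stirling M j) * int (j choose t))"
  proof (rule exact_pow2_sum[of _ M])
    have "v2 (M choose t) = m - v2 t" using v2_binomial_pow2[of t m] t M_def by simp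
    then show "exact_pow2 (m - v2 t) (2 ^ (M - M) * int (stirling M M) * int (M choose t))"
      using exact_pow2_of_nat_iff[of "M choose t"] \<open>t < M\<close> by simp
  next
    fix j assume j: "j \<in> {..M}" "j \<noteq> M"
    show "2 ^ Suc (m - v2 t) dvd 2 ^ (M - j) * int (stirling M j) * int (j choose t)"
    proof (cases "j < t")
      case True
      then show ?thesis by (simp add: binomial_eq_0)
    next
      case False
      have j1: "1 \<le> j" "j < M" using False t j by auto
      have "2 ^ (M - j) * 2 ^ stirling_val m j dvd 2 ^ (M - j) * int (stirling M j)"
        using stirling_pow2_dvd[of j] j1 M_def by (simp add: mult_dvd_mono)
      then have "2 ^ ((M - j) + stirling_val m j) dvd 2 ^ (M - j) * int (stirling M j)"
        by (simp only: power_add)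
      moreover have "Suc (m - v2 t) \<le> (M - j) + stirling_val m j"
        using stirling_val_complement_ge[of j m] j1 vt M_def by simp
      ultimately show ?thesis by (meson dvd_mult2 power_le_dvd)
    qed
  qed simp_all
  then show ?thesis using coeff_odd_rising_poly[of M t] M_def by simp
qed

lemma coeff_odd_rising_poly_reflect_term_dvd:
  assumes "1 \<le> m" "odd t" "t < j" "j \<le> 2 ^ m"
  shows "2 ^ Suc (2 * m) dvd
    coeff (odd_rising_poly (2 ^ m)) j * (int (j choose t) * (- (2 * 2 ^ m)) ^ (j - t))"
proof (cases "j = Suc t")
  case True
  have "exact_pow2 (m - v2 j) (coeff (odd_rising_poly (2 ^ m)) j)"
    using exact_pow2_coeff_odd_rising_poly_even[of j] True assms by simp
  moreover have "(2::int) ^ v2 j dvd int j"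
    by (metis multiplicity_dvd of_nat_dvd_iff of_nat_numeral of_nat_power)
  moreover have "v2 j \<le> m" using v2_le_exp[of j m] assms by simp
  ultimately have "2 ^ (m - v2 j) * 2 ^ v2 j dvd coeff (odd_rising_poly (2 ^ m)) j * int j"
    using exact_pow2_imp_dvd mult_dvd_mono by blast
  then have "2 ^ m dvd coeff (odd_rising_poly (2 ^ m)) j * int j"
    using \<open>v2 j \<le> m\<close> by (simp flip: power_add)
  then have dvd: "2 ^ m * 2 ^ Suc m dvd coeff (odd_rising_poly (2 ^ m)) j * int j * (- (2 * 2 ^ m))"
    by (intro mult_dvd_mono) simp_all
  have "(2::int) ^ Suc (2 * m) = 2 ^ m * 2 ^ Suc m" by (simp flip: power_add)
  moreover have "coeff (odd_rising_poly (2 ^ m)) j * (int (j choose t) * (- (2 * 2 ^ m)) ^ (j - t))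
      = coeff (odd_rising_poly (2 ^ m)) j * int j * (- (2 * 2 ^ m))"
    using True by simp
  ultimately show ?thesis using dvd by (simp only:)
next
  case False
  define r where "r = j - t - 2"
  have r: "j - t = r + 2" using False assms by (simp add: r_def)
  have "(- (2 * 2 ^ m :: int)) ^ (j - t) = (- (2 * 2 ^ m)) ^ r * (2 ^ Suc m) ^ 2"
    unfolding r by (simp add: power_add power2_eq_square)
  also have "(2 ^ Suc m) ^ 2 = (2::int) ^ (Suc m * 2)" by (rule power_mult[symmetric])
  finally have "(2::int) ^ (Suc m * 2) dvd (- (2 * 2 ^ m)) ^ (j - t)" by simp
  then have "(2::int) ^ Suc (2 * m) dvd (- (2 * 2 ^ m)) ^ (j - t)" by (rule power_le_dvd) simp
  then show ?thesis by simp
qed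

text \<open>For odd \<open>t\<close>, reflection gives \<open>2 b(t) = - \<Sum>j>t. b(j) C(j,t) (-2^(m+1))^(j-t)\<close>.\<close>

lemma coeff_odd_rising_poly_odd_dvd:
  assumes "1 \<le> m" "odd t" "t \<le> 2 ^ m"
  shows "2 ^ (2 * m) dvd coeff (odd_rising_poly (2 ^ m)) t"
proof -
  define M :: nat where "M = 2 ^ m"
  have "even M" using assms M_def by (cases m) auto
  then have "t < M" using assms M_def by (cases "t = M") auto
  define g where "g j = coeff (odd_rising_poly M) j * (int (j choose t) * (- (2 * int M)) ^ (j - t))" for j
  have "coeff (odd_rising_poly M) t = - (\<Sum>j\<le>M. g j)"
    using coeff_odd_rising_poly_reflect[OF \<open>even M\<close>, of t] assms by (simp add: g_def sum_negf)
  also have "(\<Sum>j\<le>M. g j) = g t + (\<Sum>j\<in>{..M} - {t}. g j)"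
    using \<open>t < M\<close> by (simp add: sum.remove)
  also have "g t = coeff (odd_rising_poly M) t" by (simp add: g_def)
  finally have "2 * coeff (odd_rising_poly M) t = - (\<Sum>j\<in>{..M} - {t}. g j)" by simp
  moreover have "2 ^ Suc (2 * m) dvd (\<Sum>j\<in>{..M} - {t}. g j)"
  proof (rule dvd_sum)
    fix j assume j: "j \<in> {..M} - {t}"
    show "2 ^ Suc (2 * m) dvd g j"
    proof (cases "j < t")
      case True
      then show ?thesis by (simp add: g_def binomial_eq_0)
    next
      case False
      then show ?thesis
        using coeff_odd_rising_poly_reflect_term_dvd[of t j] assms j M_def by (simp add: g_def)
    qed
  qed
  ultimately have "2 * 2 ^ (2 * m) dvd 2 * coeff (odd_rising_poly M) t" by simp
  then show ?thesis using M_def by (subst (asm) dvd_mult_cancel_left) simp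
qed

lemma odd_rising_val_bound_dvd:
  "t \<le> 2 ^ m \<Longrightarrow> 2 ^ odd_rising_val_bound m t dvd coeff (odd_rising_poly (2 ^ m)) t"
  using exact_pow2_coeff_odd_rising_poly_even[of t] coeff_odd_rising_poly_odd_dvd[of t]
    exact_pow2_imp_dvd by (cases "m = 0") (auto simp: odd_rising_val_bound_def)

lemma stirling_conv_term_dvd:
  assumes "1 \<le> a \<Longrightarrow> a \<le> 2 ^ m \<Longrightarrow> k - a \<le> 2 ^ m \<Longrightarrow>
    Suc e \<le> (2 ^ m - a) + stirling_val m a + odd_rising_val_bound m (k - a)"
  shows "2 ^ Suc e dvd stirling_conv_term m k a"
proof (cases "a = 0 \<or> 2 ^ m < a \<or> 2 ^ m < k - a")
  case True
  then show ?thesis by (auto simp: stirling_conv_term_def coeff_eq_0)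
next
  case False
  then have a: "1 \<le> a" "a \<le> 2 ^ m" "k - a \<le> 2 ^ m" by auto
  have "2 ^ (2 ^ m - a) * 2 ^ stirling_val m a * 2 ^ odd_rising_val_bound m (k - a)
      dvd stirling_conv_term m k a"
    unfolding stirling_conv_term_def
    using stirling_pow2_dvd[OF a(1,2)] odd_rising_val_bound_dvd[OF a(3)] by (intro mult_dvd_mono) simp_all
  then have "2 ^ ((2 ^ m - a) + stirling_val m a + odd_rising_val_bound m (k - a))
      dvd stirling_conv_term m k a"
    by (simp only: power_add)
  then show ?thesis using assms[OF a] by (rule power_le_dvd)
qed

lemma exact_pow2_stirling_pow2_Suc_dominant:
  assumes "a0 \<le> k" "exact_pow2 e (stirling_conv_term m k a0)"
    and "\<And>a. a \<le> k \<Longrightarrow> a \<noteq> a0 \<Longrightarrow> 1 \<le> a \<Longrightarrow> a \<le> 2 ^ m \<Longrightarrow> k - a \<le> 2 ^ m \<Longrightarrow>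
      Suc e \<le> (2 ^ m - a) + stirling_val m a + odd_rising_val_bound m (k - a)"
  shows "exact_pow2 e (int (stirling (2 ^ Suc m) k))"
  unfolding stirling_pow2_Suc_conv
  using assms by (intro exact_pow2_sum[of _ a0] stirling_conv_term_dvd) auto

lemma exact_pow2_stirling_pow2_Suc_low:
  assumes "1 \<le> k" "k \<le> 2 ^ m"
  shows "exact_pow2 (stirling_val (Suc m) k) (int (stirling (2 ^ Suc m) k))"
proof (rule exact_pow2_stirling_pow2_Suc_dominant[of k])
  have "exact_pow2 ((2 ^ m - k) + stirling_val m k + 0) (stirling_conv_term m k k)"
    unfolding stirling_conv_term_def
    using exact_pow2_mult[OF exact_pow2_mult[OF exact_pow2_power exact_val[OF assms]]
        exact_pow2_odd[OF odd_coeff_0_odd_rising_poly]]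
    by simp
  then show "exact_pow2 (stirling_val (Suc m) k) (stirling_conv_term m k k)"
    using stirling_val_low[OF assms(2)] by simp
next
  fix a :: nat assume "a \<le> k" "a \<noteq> k" "1 \<le> a"
  then show "Suc (stirling_val (Suc m) k)
      \<le> (2 ^ m - a) + stirling_val m a + odd_rising_val_bound m (k - a)"
    using stirling_val_low_gap[of a k m] stirling_val_low[OF assms(2)] assms by simp
qed simp

lemma exact_pow2_stirling_pow2_Suc_high_even:
  assumes t: "even t" "0 < t" "t < 2 ^ m"
  shows "exact_pow2 (stirling_val (Suc m) (2 ^ m + t)) (int (stirling (2 ^ Suc m) (2 ^ m + t)))"
proof (rule exact_pow2_stirling_pow2_Suc_dominant[of "2 ^ m"])
  show "exact_pow2 (stirling_val (Suc m) (2 ^ m + t)) (stirling_conv_term m (2 ^ m + t) (2 ^ m))"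
    using exact_pow2_coeff_odd_rising_poly_even[of t] stirling_val_high_even[of t m] t
    by (simp add: stirling_conv_term_def)
next
  fix a :: nat assume "a \<noteq> 2 ^ m" "1 \<le> a" "a \<le> 2 ^ m"
  then have "m \<le> 2 ^ m - a + stirling_val m a" using stirling_val_complement_ge[of a m] by simp
  moreover have "1 \<le> v2 t" "v2 t < m" using v2_even_ge_1 v2_less_exp t by blast+
  moreover have "stirling_val (Suc m) (2 ^ m + t) = m - v2 t"
    using stirling_val_high_even[of t m] t by simp
  ultimately show "Suc (stirling_val (Suc m) (2 ^ m + t))
      \<le> (2 ^ m - a) + stirling_val m a + odd_rising_val_bound m (2 ^ m + t - a)"
    by linarith
qed simp

lemma exact_pow2_stirling_pow2_Suc_high_odd:
  assumes t: "odd t" "t < 2 ^ m"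
  shows "exact_pow2 (stirling_val (Suc m) (2 ^ m + t)) (int (stirling (2 ^ Suc m) (2 ^ m + t)))"
proof (rule exact_pow2_stirling_pow2_Suc_dominant[of "2 ^ m - 1"])
  define M :: nat where "M = 2 ^ m"
  have "1 \<le> m" using t by (cases m) auto
  then have "2 \<le> M" using M_def by (simp add: self_le_power)
  have vt: "v2 (t + 1) \<le> m" using v2_le_exp[of "t + 1" m] t by simp
  have "v2 (M choose 2) = m - 1"
    using v2_binomial_pow2[of 2 m] \<open>2 \<le> M\<close> M_def by simp
  then have "exact_pow2 (m - 1) (int (stirling M (M - 1)))"
    using stirling_Suc_n_n[of "M - 1"] exact_pow2_of_nat_iff[of "M choose 2"] \<open>2 \<le> M\<close> by simp
  moreover have "exact_pow2 (m - v2 (t + 1)) (coeff (odd_rising_poly M) (t + 1))"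
    using exact_pow2_coeff_odd_rising_poly_even[of "t + 1"] t M_def by simp
  ultimately have "exact_pow2 (1 + (m - 1) + (m - v2 (t + 1)))
      (2 ^ 1 * int (stirling M (M - 1)) * coeff (odd_rising_poly M) (t + 1))"
    by (intro exact_pow2_mult exact_pow2_power)
  moreover have "stirling_conv_term m (2 ^ m + t) (2 ^ m - 1)
      = 2 ^ 1 * int (stirling M (M - 1)) * coeff (odd_rising_poly M) (t + 1)"
    using \<open>2 \<le> M\<close> by (simp add: stirling_conv_term_def M_def)
  moreover have "stirling_val (Suc m) (2 ^ m + t) = 1 + (m - 1) + (m - v2 (t + 1))"
    using stirling_val_high_odd[of t m] t vt \<open>1 \<le> m\<close> by simp
  ultimately show "exact_pow2 (stirling_val (Suc m) (2 ^ m + t)) (stirling_conv_term m (2 ^ m + t) (2 ^ m - 1))"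
    by simp
next
  fix a :: nat assume "a \<noteq> 2 ^ m - 1" "a \<le> 2 ^ m" "2 ^ m + t - a \<le> 2 ^ m"
  then show "Suc (stirling_val (Suc m) (2 ^ m + t))
      \<le> (2 ^ m - a) + stirling_val m a + odd_rising_val_bound m (2 ^ m + t - a)"
    using stirling_val_odd_gap[of t m a] stirling_val_high_odd[of t m] t by simp
qed simp

lemma exact_pow2_stirling_pow2_Suc:
  assumes "1 \<le> k" "k \<le> 2 ^ Suc m"
  shows "exact_pow2 (stirling_val (Suc m) k) (int (stirling (2 ^ Suc m) k))"
proof -
  consider "k \<le> 2 ^ m" | "k = 2 ^ Suc m" | t where "k = 2 ^ m + t" "0 < t" "t < 2 ^ m"
    using assms by (metis le_add_diff_inverse less_imp_le_nat linorder_not_le mult_2 power_Suc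
        zero_less_diff nat_add_left_cancel_less order.not_eq_order_implies_strict)
  then show ?thesis
  proof cases
    case 1
    then show ?thesis using assms exact_pow2_stirling_pow2_Suc_low by blast
  next
    case 2
    then have "stirling_val (Suc m) k = 0" using stirling_val_top[of "Suc m"] by simp
    then show ?thesis using 2 exact_pow2_odd[of 1] by simp
  next
    case 3
    then show ?thesis
      using exact_pow2_stirling_pow2_Suc_high_even exact_pow2_stirling_pow2_Suc_high_odd
      by (cases "even t") auto
  qed
qed

end

lemma exact_pow2_stirling_pow2:
  "1 \<le> k \<Longrightarrow> k \<le> 2 ^ m \<Longrightarrow> exact_pow2 (stirling_val m k) (int (stirling (2 ^ m) k))"
proof (induction m arbitrary: k)
  case 0
  then show ?case using exact_pow2_odd[of 1] by simp
next
  case (Suc m)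
  then show ?case using exact_pow2_stirling_pow2_Suc by blast
qed

lemma multiplicity_stirling_pow2:
  assumes "1 \<le> k" "k \<le> 2 ^ m"
  shows "multiplicity 2 (stirling (2 ^ m) k) = stirling_val m k"
proof -
  have "exact_pow2 (stirling_val m k) (int (stirling (2 ^ m) k))"
    using exact_pow2_stirling_pow2[OF assms] .
  moreover from this have "stirling (2 ^ m) k > 0" using exact_pow2_nonzero by fastforce
  ultimately show ?thesis using exact_pow2_of_nat_iff by blast
qed

theorem corollary1p4:
  fixes n k :: nat
  assumes "n \<ge> 1" and "k \<ge> 1" and "k \<le> 2 ^ n"
  shows "multiplicity (2::nat) (stirling (2 ^ n) k) \<le> multiplicity (2::nat) (stirling (2 ^ n) 1)"
  using multiplicity_stirling_pow2[of k n] multiplicity_stirling_pow2[of 1 n]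
    stirling_val_le_one[of k n] assms by simp

end
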